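(* Let $\dot x = Ax+\sum_{i=1}^mB_iu_i$, $y_i=C_ix$ be an $n$-dimensional $m$-channel continuous-time linear system with neighbor graph $\mathbb{N}$, let $n_i>0$ for all $i\in\{1,\dots,m\}$, and let $\{\bar A,\bar B_i,\bar C_i;m\}$ be the extended system with $\bar A=\begin{bmatrix}A&0\\0&0\end{bmatrix}$, $\bar B_i=\begin{bmatrix}B_i&0\\0&E_i\end{bmatrix}$, $\bar C_i=\begin{bmatrix}C_i&0\\0&E_{\mathcal{N}_i}'\end{bmatrix}$, where $E_i$ is the $(\sum_kn_k)\times n_i$ block column matrix with $I_{n_i}$ as its $i$th block and zeros elsewhere and $E_{\mathbf{s}}=[E_{i_1}\ \cdots\ E_{i_s}]$ for $\mathbf{s}=\{i_1<\dots<i_s\}$. Then the transfer graph of the extended system is strongly connected if and only if the union of the transfer graph and the neighbor graph of the original system is strongly connected.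
   Context: The neighbor graph is a directed graph on $\{1,\dots,m\}$ with an arc $j\to i$ iff $j$ is a neighbor of $i$; $\mathcal{N}_i$ is the set of neighbors of $i$ including $i$. The transfer graph of an $m$-channel system $\{A,B_i,C_i;m\}$ is the directed graph on $\{1,\dots,m\}$ with an arc from $j$ to $i$ whenever the transfer matrix $C_i(sI-A)^{-1}B_j\neq0$. The union of two directed graphs on the same $m$ vertices is the directed graph on those vertices whose arc set is the union of their arc sets. Strongly connected: directed paths exist between every ordered pair of vertices. *)

theory Defs
  imports Complex_Main "Jordan_Normal_Form.Matrix"
begin

text \<open>Channels are indexed 0,...,m-1 (the paper uses 1,...,m).\<close>

text \<open>Transfer matrix C (sI - A)^{-1} B is nonzero as a rational matrix:
  it is nonzero at some complex s where sI - A is invertible.\<close>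
definition transfer_nonzero :: "real mat \<Rightarrow> real mat \<Rightarrow> real mat \<Rightarrow> bool" where
  "transfer_nonzero A B C \<longleftrightarrow>
     (\<exists>(s::complex) X. inverts_mat (s \<cdot>\<^sub>m 1\<^sub>m (dim_row A) - map_mat complex_of_real A) X
        \<and> inverts_mat X (s \<cdot>\<^sub>m 1\<^sub>m (dim_row A) - map_mat complex_of_real A)
        \<and> map_mat complex_of_real C * X * map_mat complex_of_real B
            \<noteq> 0\<^sub>m (dim_row C) (dim_col B))"

text \<open>Transfer graph: arc (j,i) (from j to i) iff C_i (sI-A)^{-1} B_j \<noteq> 0.\<close>
definition transfer_graph :: "nat \<Rightarrow> real mat \<Rightarrow> (nat \<Rightarrow> real mat) \<Rightarrow> (nat \<Rightarrow> real mat) \<Rightarrow> (nat \<times> nat) set" where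
  "transfer_graph m A B C = {(j,i). j < m \<and> i < m \<and> transfer_nonzero A (B j) (C i)}"

definition neighbor_graph :: "nat \<Rightarrow> (nat \<Rightarrow> nat set) \<Rightarrow> (nat \<times> nat) set" where
  "neighbor_graph m Nb = {(j,i). j < m \<and> i < m \<and> j \<in> Nb i}"

definition strongly_connected :: "nat \<Rightarrow> (nat \<times> nat) set \<Rightarrow> bool" where
  "strongly_connected m G \<longleftrightarrow> (\<forall>i<m. \<forall>j<m. (i,j) \<in> G\<^sup>*)"

definition blk_off :: "(nat \<Rightarrow> nat) \<Rightarrow> nat \<Rightarrow> nat" where
  "blk_off nn i = (\<Sum>k<i. nn k)"

text \<open>E_i: (sum_k n_k) x n_i block column with I_{n_i} as i-th block.\<close>
definition Emat :: "nat \<Rightarrow> (nat \<Rightarrow> nat) \<Rightarrow> nat \<Rightarrow> real mat" where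
  "Emat m nn i = mat (\<Sum>k<m. nn k) (nn i)
      (\<lambda>(r,c). if r = blk_off nn i + c then 1 else 0)"

text \<open>Horizontal concatenation [E_{i_1} ... E_{i_s}] along a list of indices.\<close>
fun Ecat :: "nat \<Rightarrow> (nat \<Rightarrow> nat) \<Rightarrow> nat list \<Rightarrow> real mat" where
  "Ecat m nn [] = 0\<^sub>m (\<Sum>k<m. nn k) 0"
| "Ecat m nn (i # is) = four_block_mat (Emat m nn i) (Ecat m nn is)
      (0\<^sub>m 0 (nn i)) (0\<^sub>m 0 (dim_col (Ecat m nn is)))"

definition Eset :: "nat \<Rightarrow> (nat \<Rightarrow> nat) \<Rightarrow> nat set \<Rightarrow> real mat" where
  "Eset m nn S = Ecat m nn (sorted_list_of_set S)"

definition ext_A :: "nat \<Rightarrow> (nat \<Rightarrow> nat) \<Rightarrow> real mat \<Rightarrow> real mat" where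
  "ext_A m nn A = (let N = (\<Sum>k<m. nn k) in
     four_block_mat A (0\<^sub>m (dim_row A) N) (0\<^sub>m N (dim_col A)) (0\<^sub>m N N))"

definition ext_B :: "nat \<Rightarrow> (nat \<Rightarrow> nat) \<Rightarrow> (nat \<Rightarrow> real mat) \<Rightarrow> nat \<Rightarrow> real mat" where
  "ext_B m nn B i = (let N = (\<Sum>k<m. nn k) in
     four_block_mat (B i) (0\<^sub>m (dim_row (B i)) (nn i)) (0\<^sub>m N (dim_col (B i))) (Emat m nn i))"

definition ext_C :: "nat \<Rightarrow> (nat \<Rightarrow> nat) \<Rightarrow> (nat \<Rightarrow> nat set) \<Rightarrow> (nat \<Rightarrow> real mat) \<Rightarrow> nat \<Rightarrow> real mat" where
  "ext_C m nn Nb C i = (let N = (\<Sum>k<m. nn k); Et = transpose_mat (Eset m nn (Nb i)) in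
     four_block_mat (C i) (0\<^sub>m (dim_row (C i)) N) (0\<^sub>m (dim_row Et) (dim_col (C i))) Et)"

end

theory Submission
  imports Defs "Jordan_Normal_Form.Char_Poly"
begin

(* The extended state matrix is diag (A, 0), and the extended input and output matrices are block
   diagonal, so at every s \<noteq> 0 outside the spectrum of A the extended transfer matrix is
   diag (C_i (sI - A)^-1 B_j, s^-1 E_{N_i}' E_j).  The second block is nonzero exactly when
   j \<in> N_i, since E_k' E_j is the identity for k = j and zero otherwise.  The first block is
   rational in s, so if it is nonzero at one point it is nonzero at all but finitely many points,
   in particular at some s \<noteq> 0.  Hence the extended transfer graph is the union of the transfer
   graph and the neighbor graph, and the two strong-connectivity conditions coincide. *)

definition block_diag :: "'a::zero mat \<Rightarrow> 'a mat \<Rightarrow> 'a mat" where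
  "block_diag P Q = four_block_mat P (0\<^sub>m (dim_row P) (dim_col Q)) (0\<^sub>m (dim_row Q) (dim_col P)) Q"

lemma block_diag_carrier_mat [simp]:
  "P \<in> carrier_mat a b \<Longrightarrow> Q \<in> carrier_mat c d \<Longrightarrow> block_diag P Q \<in> carrier_mat (a + c) (b + d)"
  unfolding block_diag_def by simp

lemma map_block_diag:
  assumes "f 0 = 0"
  shows "map_mat f (block_diag P Q) = block_diag (map_mat f P) (map_mat f Q)"
  using assms unfolding block_diag_def by (intro eq_matI) auto

lemma block_diag_mult:
  fixes P1 :: "'a::semiring_0 mat"
  assumes "P1 \<in> carrier_mat a b" "Q1 \<in> carrier_mat c d" "P2 \<in> carrier_mat b e" "Q2 \<in> carrier_mat d f"
  shows "block_diag P1 Q1 * block_diag P2 Q2 = block_diag (P1 * P2) (Q1 * Q2)"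
  unfolding block_diag_def using assms
  by (subst mult_four_block_mat[OF assms(1) _ _ assms(2) assms(3) _ _ assms(4)]) auto

lemma four_block_mat_eq_zero_iff:
  assumes "P \<in> carrier_mat a b" "Q \<in> carrier_mat a d" "R \<in> carrier_mat c b" "S \<in> carrier_mat c d"
  shows "four_block_mat P Q R S = 0\<^sub>m (a + c) (b + d) \<longleftrightarrow>
    P = 0\<^sub>m a b \<and> Q = 0\<^sub>m a d \<and> R = 0\<^sub>m c b \<and> S = 0\<^sub>m c d"
proof
  assume zero: "four_block_mat P Q R S = 0\<^sub>m (a + c) (b + d)"
  have "M $$ (i, j) = 0" if "M \<in> {P, Q, R, S}" "i < dim_row M" "j < dim_col M" for M i j
    using that assms arg_cong[OF zero, of "\<lambda>M. M $$ (i, j)"] arg_cong[OF zero, of "\<lambda>M. M $$ (i + a, j)"]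
      arg_cong[OF zero, of "\<lambda>M. M $$ (i, j + b)"] arg_cong[OF zero, of "\<lambda>M. M $$ (i + a, j + b)"]
    by auto
  then show "P = 0\<^sub>m a b \<and> Q = 0\<^sub>m a d \<and> R = 0\<^sub>m c b \<and> S = 0\<^sub>m c d"
    using assms by auto
qed simp

lemma block_diag_eq_zero_iff:
  assumes "P \<in> carrier_mat a b" "Q \<in> carrier_mat c d"
  shows "block_diag P Q = 0\<^sub>m (a + c) (b + d) \<longleftrightarrow> P = 0\<^sub>m a b \<and> Q = 0\<^sub>m c d"
  using four_block_mat_eq_zero_iff[of P a b _ d _ c] assms unfolding block_diag_def by auto

lemma det_block_diag:
  fixes P :: "'a::idom mat"
  assumes "P \<in> carrier_mat a a" and "Q \<in> carrier_mat c c"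
  shows "det (block_diag P Q) = det P * det Q"
  unfolding block_diag_def using assms by (intro det_four_block_mat_upper_right_zero) auto

lemma inverts_mat_block_diag:
  assumes "P \<in> carrier_mat a a" "Q \<in> carrier_mat c c" "X \<in> carrier_mat a a" "Y \<in> carrier_mat c c"
    and "inverts_mat P X" "inverts_mat Q Y"
  shows "inverts_mat (block_diag P Q) (block_diag X Y)"
  using assms unfolding inverts_mat_def
  by (simp add: block_diag_mult[OF assms(1-4)]) (simp add: block_diag_def)

lemma smult_mat_eq_zero_iff:
  fixes M :: "'a::field mat"
  assumes "k \<noteq> 0" and "M \<in> carrier_mat a b"
  shows "k \<cdot>\<^sub>m M = 0\<^sub>m a b \<longleftrightarrow> M = 0\<^sub>m a b"
proof
  assume zero: "k \<cdot>\<^sub>m M = 0\<^sub>m a b"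
  have "M $$ (i, j) = 0" if "i < a" "j < b" for i j
    using arg_cong[OF zero, of "\<lambda>M. M $$ (i, j)"] that assms by simp
  then show "M = 0\<^sub>m a b" using assms(2) by auto
qed simp

lemma inverts_mat_iff_adj_mat:
  fixes K :: "'a::field mat"
  assumes K: "K \<in> carrier_mat n n"
  shows "inverts_mat K X \<and> inverts_mat X K \<longleftrightarrow> det K \<noteq> 0 \<and> X = (1 / det K) \<cdot>\<^sub>m adj_mat K"
proof -
  have adj_inverse: "inverts_mat K ((1 / det K) \<cdot>\<^sub>m adj_mat K) \<and> inverts_mat ((1 / det K) \<cdot>\<^sub>m adj_mat K) K"
    if "det K \<noteq> 0"
    using adj_mat[OF K] K that unfolding inverts_mat_def
    by (auto simp: mult_smult_distrib mult_smult_assoc_mat)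
  moreover have "det K \<noteq> 0 \<and> X = (1 / det K) \<cdot>\<^sub>m adj_mat K"
    if KX: "inverts_mat K X" and XK: "inverts_mat X K"
  proof -
    have X: "X \<in> carrier_mat n n"
      using K KX XK unfolding inverts_mat_def
      by (metis carrier_matD(1,2) carrier_matI index_mult_mat(3) index_one_mat(3))
    have "det K * det X = 1"
      using det_mult[OF K X] KX K unfolding inverts_mat_def by simp
    then have det: "det K \<noteq> 0" by auto
    define Y where "Y = (1 / det K) \<cdot>\<^sub>m adj_mat K"
    have Y: "Y \<in> carrier_mat n n" and KY: "K * Y = 1\<^sub>m n"
      using adj_inverse[OF det] adj_mat(1)[OF K] K unfolding Y_def inverts_mat_def by auto
    have "X = X * (K * Y)" using KY X by simp
    also have "\<dots> = (X * K) * Y" using X K Y by (simp only: assoc_mult_mat)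
    also have "\<dots> = Y" using XK X Y unfolding inverts_mat_def by simp
    finally show ?thesis using det unfolding Y_def by simp
  qed
  ultimately show ?thesis by blast
qed

section \<open>Resolvents\<close>

text \<open>This is \<open>(s I - A)\<^sup>-\<^sup>1\<close> when \<open>det (s I - A) \<noteq> 0\<close>, and the zero matrix otherwise.\<close>
definition resolvent :: "'a::field mat \<Rightarrow> 'a \<Rightarrow> 'a mat" where
  "resolvent A s = (1 / det (s \<cdot>\<^sub>m 1\<^sub>m (dim_row A) - A)) \<cdot>\<^sub>m adj_mat (s \<cdot>\<^sub>m 1\<^sub>m (dim_row A) - A)"

lemma resolvent_carrier_mat [simp]: "A \<in> carrier_mat n n \<Longrightarrow> resolvent A s \<in> carrier_mat n n"
  unfolding resolvent_def using adj_mat(1)[of "s \<cdot>\<^sub>m 1\<^sub>m n - A" n] by (simp add: minus_carrier_mat)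

lemma inverts_mat_resolvent_iff:
  fixes A :: "'a::field mat"
  assumes "A \<in> carrier_mat n n"
  shows "inverts_mat (s \<cdot>\<^sub>m 1\<^sub>m n - A) X \<and> inverts_mat X (s \<cdot>\<^sub>m 1\<^sub>m n - A) \<longleftrightarrow>
    det (s \<cdot>\<^sub>m 1\<^sub>m n - A) \<noteq> 0 \<and> X = resolvent A s"
  using assms inverts_mat_iff_adj_mat[of "s \<cdot>\<^sub>m 1\<^sub>m n - A" n X] unfolding resolvent_def
  by (simp add: minus_carrier_mat)

lemma smult_one_minus_block_diag_zero:
  fixes A :: "'a::ring_1 mat"
  shows "A \<in> carrier_mat n n \<Longrightarrow>
    s \<cdot>\<^sub>m 1\<^sub>m (n + N) - block_diag A (0\<^sub>m N N) = block_diag (s \<cdot>\<^sub>m 1\<^sub>m n - A) (s \<cdot>\<^sub>m 1\<^sub>m N)"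
  unfolding block_diag_def by (intro eq_matI) auto

lemma det_smult_one_minus_block_diag_zero:
  fixes A :: "'a::idom mat"
  assumes "A \<in> carrier_mat n n"
  shows "det (s \<cdot>\<^sub>m 1\<^sub>m (n + N) - block_diag A (0\<^sub>m N N)) = det (s \<cdot>\<^sub>m 1\<^sub>m n - A) * s ^ N"
  unfolding smult_one_minus_block_diag_zero[OF assms]
  using assms by (subst det_block_diag[of _ n _ N]) (auto simp: minus_carrier_mat)

lemma resolvent_block_diag_zero:
  fixes A :: "'a::field mat"
  assumes A: "A \<in> carrier_mat n n" and "s \<noteq> 0" and "det (s \<cdot>\<^sub>m 1\<^sub>m n - A) \<noteq> 0"
  shows "resolvent (block_diag A (0\<^sub>m N N)) s = block_diag (resolvent A s) ((1 / s) \<cdot>\<^sub>m 1\<^sub>m N)"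
proof -
  have "inverts_mat (s \<cdot>\<^sub>m 1\<^sub>m n - A) (resolvent A s) \<and> inverts_mat (resolvent A s) (s \<cdot>\<^sub>m 1\<^sub>m n - A)"
    using inverts_mat_resolvent_iff[OF A] assms by blast
  moreover have "inverts_mat (s \<cdot>\<^sub>m 1\<^sub>m N) ((1 / s) \<cdot>\<^sub>m 1\<^sub>m N) \<and> inverts_mat ((1 / s) \<cdot>\<^sub>m 1\<^sub>m N) (s \<cdot>\<^sub>m 1\<^sub>m N)"
    using \<open>s \<noteq> 0\<close> unfolding inverts_mat_def
    by (auto simp: mult_smult_distrib[of _ N N _ N] mult_smult_assoc_mat[of _ N N _ N])
  ultimately have "inverts_mat (s \<cdot>\<^sub>m 1\<^sub>m (n + N) - block_diag A (0\<^sub>m N N))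
      (block_diag (resolvent A s) ((1 / s) \<cdot>\<^sub>m 1\<^sub>m N)) \<and>
    inverts_mat (block_diag (resolvent A s) ((1 / s) \<cdot>\<^sub>m 1\<^sub>m N))
      (s \<cdot>\<^sub>m 1\<^sub>m (n + N) - block_diag A (0\<^sub>m N N))"
    unfolding smult_one_minus_block_diag_zero[OF A] using A
    by (auto intro!: inverts_mat_block_diag simp: minus_carrier_mat)
  then show ?thesis
    using inverts_mat_resolvent_iff[of "block_diag A (0\<^sub>m N N)" "n + N"] A by auto
qed

lemma resolvent_transfer_block_diag:
  fixes A B C E F :: "'a::field mat"
  assumes A: "A \<in> carrier_mat n n" and B: "B \<in> carrier_mat n p" and C: "C \<in> carrier_mat q n"
    and E: "E \<in> carrier_mat N p'" and F: "F \<in> carrier_mat q' N"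
    and "s \<noteq> 0" and "det (s \<cdot>\<^sub>m 1\<^sub>m n - A) \<noteq> 0"
  shows "block_diag C F * resolvent (block_diag A (0\<^sub>m N N)) s * block_diag B E
    = block_diag (C * resolvent A s * B) ((1 / s) \<cdot>\<^sub>m (F * E))"
  using assms resolvent_carrier_mat[OF A, of s]
  by (simp add: resolvent_block_diag_zero block_diag_mult[of _ q n _ q' N _ n _ N]
      block_diag_mult[of _ q n _ q' N _ p _ p'] mult_smult_distrib[of _ q' N _ N] mult_smult_assoc_mat[of _ q' N _ p'])

section \<open>Transfer matrices are generically nonzero\<close>

lemma (in comm_ring_hom) hom_adj_mat: "adj_mat (map_mat hom A) = map_mat hom (adj_mat A)"
proof -
  have "mat_delete (map_mat hom A) i j = map_mat hom (mat_delete A i j)" for i j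
    unfolding mat_delete_def by (rule eq_matI) auto
  then show ?thesis
    unfolding adj_mat_def cofactor_def by (intro eq_matI) (auto simp: hom_mult hom_power hom_uminus)
qed

lemma comm_ring_hom_poly: "comm_ring_hom (\<lambda>p. poly p s)"
  by unfold_locales auto

lemma poly_char_poly_matrix:
  "A \<in> carrier_mat n n \<Longrightarrow> map_mat (\<lambda>p. poly p s) (char_poly_matrix A) = s \<cdot>\<^sub>m 1\<^sub>m n - A"
  by (rule eq_matI) (auto simp: char_poly_matrix_def)

lemma poly_char_poly: "A \<in> carrier_mat n n \<Longrightarrow> poly (char_poly A) s = det (s \<cdot>\<^sub>m 1\<^sub>m n - A)"
  unfolding char_poly_def comm_ring_hom.hom_det[OF comm_ring_hom_poly, symmetric]
  by (simp add: poly_char_poly_matrix)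

lemma poly_adj_char_poly_matrix:
  assumes A: "A \<in> carrier_mat n n" and B: "B \<in> carrier_mat n p" and C: "C \<in> carrier_mat q n"
  shows "map_mat (\<lambda>f. poly f s)
      (map_mat (\<lambda>x. [:x:]) C * adj_mat (char_poly_matrix A) * map_mat (\<lambda>x. [:x:]) B)
    = C * adj_mat (s \<cdot>\<^sub>m 1\<^sub>m n - A) * B"
proof -
  have hom: "semiring_hom (\<lambda>f. poly f s)" by unfold_locales auto
  have "map_mat (\<lambda>f. poly f s) (map_mat (\<lambda>x. [:x:]) M) = M" for M :: "'a mat"
    by (intro eq_matI) auto
  then show ?thesis
    using A B C adj_mat(1)[of "char_poly_matrix A" n] adj_mat(1)[of "s \<cdot>\<^sub>m 1\<^sub>m n - A" n]
    by (simp add: minus_carrier_mat semiring_hom.mat_hom_mult[OF hom, of _ q n _ n] semiring_hom.mat_hom_mult[OF hom, of _ q n _ p]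
        semiring_hom.mat_hom_mult[OF hom, of _ n n _ p] comm_ring_hom.hom_adj_mat[OF comm_ring_hom_poly, symmetric] poly_char_poly_matrix)
qed

lemma ex_poly_nonzero_notin:
  fixes f :: "'a::{idom,ring_char_0} poly"
  assumes "f \<noteq> 0" and "finite F"
  shows "\<exists>x. x \<notin> F \<and> poly f x \<noteq> 0"
proof -
  have "finite ({x. poly f x = 0} \<union> F)" using assms poly_roots_finite by blast
  then obtain x where "x \<notin> {x. poly f x = 0} \<union> F"
    using ex_new_if_finite[OF infinite_UNIV_char_0] by blast
  then show ?thesis by blast
qed

lemma ex_regular_notin:
  fixes A :: "'a::field_char_0 mat"
  assumes "A \<in> carrier_mat n n" and "finite F"
  shows "\<exists>s. s \<notin> F \<and> det (s \<cdot>\<^sub>m 1\<^sub>m n - A) \<noteq> 0"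
proof -
  have "char_poly A \<noteq> 0" using degree_monic_char_poly[OF assms(1)] by auto
  then show ?thesis using ex_poly_nonzero_notin[OF _ assms(2)] poly_char_poly[OF assms(1)] by metis
qed

lemma ex_transfer_resolvent_nonzero_notin:
  fixes A B C :: "'a::field_char_0 mat"
  assumes A: "A \<in> carrier_mat n n" and B: "B \<in> carrier_mat n p" and C: "C \<in> carrier_mat q n"
    and s0: "C * resolvent A s0 * B \<noteq> 0\<^sub>m q p" "det (s0 \<cdot>\<^sub>m 1\<^sub>m n - A) \<noteq> 0"
    and "finite F"
  shows "\<exists>s. s \<notin> F \<and> det (s \<cdot>\<^sub>m 1\<^sub>m n - A) \<noteq> 0 \<and> C * resolvent A s * B \<noteq> 0\<^sub>m q p"
proof -
  have CRB: "C * resolvent A s * B \<in> carrier_mat q p" for s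
    using A B C by (meson mult_carrier_mat resolvent_carrier_mat)
  obtain a b where ab: "a < q" "b < p" "(C * resolvent A s0 * B) $$ (a, b) \<noteq> 0"
    using s0(1) CRB[of s0] by (metis carrier_matD(1,2) eq_matI index_zero_mat(1,2,3))
  txt \<open>\<open>R(s) = (C adj (s I - A) B)\<^sub>a\<^sub>b \<cdot> det (s I - A)\<close> is a polynomial in \<open>s\<close>; it is nonzero
    exactly where both factors are, in particular at \<open>s0\<close>, so it has only finitely many roots.\<close>
  define R where "R = (map_mat (\<lambda>x. [:x:]) C * adj_mat (char_poly_matrix A) * map_mat (\<lambda>x. [:x:]) B) $$ (a, b)
    * char_poly A"
  have "C * resolvent A s * B = (1 / det (s \<cdot>\<^sub>m 1\<^sub>m n - A)) \<cdot>\<^sub>m (C * adj_mat (s \<cdot>\<^sub>m 1\<^sub>m n - A) * B)" for s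
    using A B C adj_mat(1)[of "s \<cdot>\<^sub>m 1\<^sub>m n - A" n] unfolding resolvent_def
    by (simp add: minus_carrier_mat mult_smult_distrib[of C q n _ n] mult_smult_assoc_mat[of _ q n B p]
        del: assoc_mult_mat)
  then have R: "poly R s \<noteq> 0 \<longleftrightarrow> det (s \<cdot>\<^sub>m 1\<^sub>m n - A) \<noteq> 0 \<and> (C * resolvent A s * B) $$ (a, b) \<noteq> 0" for s
    using ab A B C poly_adj_char_poly_matrix[OF A B C, of s, symmetric] unfolding R_def
    by (auto simp: poly_char_poly[OF A])
  then have "R \<noteq> 0" using ab(3) s0(2) by (metis poly_0)
  then obtain s where "s \<notin> F" "poly R s \<noteq> 0" using ex_poly_nonzero_notin \<open>finite F\<close> by blast
  then show ?thesis using R[of s] ab by auto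
qed

section \<open>The block columns \<open>E\<^sub>i\<close>\<close>

lemma Emat_carrier_mat: "Emat m nn i \<in> carrier_mat (\<Sum>k<m. nn k) (nn i)"
  unfolding Emat_def by simp

lemma Ecat_carrier_mat: "Ecat m nn l \<in> carrier_mat (\<Sum>k<m. nn k) (sum_list (map nn l))"
  by (induction l) (auto simp: Emat_def)

lemma blk_off_add_le:
  assumes "i < j"
  shows "blk_off nn i + nn i \<le> blk_off nn j"
proof -
  have "blk_off nn i + nn i = (\<Sum>k<Suc i. nn k)" unfolding blk_off_def by simp
  also have "\<dots> \<le> (\<Sum>k<j. nn k)" using assms by (intro sum_mono2) auto
  finally show ?thesis unfolding blk_off_def .
qed

lemma blk_off_add_less_sum: "j < m \<Longrightarrow> c < nn j \<Longrightarrow> blk_off nn j + c < (\<Sum>k<m. nn k)"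
  using blk_off_add_le[of j m nn] unfolding blk_off_def by linarith

lemma blk_off_add_inj:
  assumes "blk_off nn i + r = blk_off nn j + c" and "r < nn i" and "c < nn j"
  shows "i = j"
  using assms blk_off_add_le[of i j nn] blk_off_add_le[of j i nn] by (cases i j rule: linorder_cases) auto

lemma transpose_Emat_mult_Emat:
  assumes "j < m"
  shows "transpose_mat (Emat m nn i) * Emat m nn j = (if i = j then 1\<^sub>m (nn i) else 0\<^sub>m (nn i) (nn j))"
proof (rule eq_matI)
  fix r c assume "r < dim_row (if i = j then 1\<^sub>m (nn i) else 0\<^sub>m (nn i) (nn j))"
    and "c < dim_col (if i = j then 1\<^sub>m (nn i) else 0\<^sub>m (nn i) (nn j) :: real mat)"
  then have r: "r < nn i" and c: "c < nn j" by (auto split: if_splits)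
  have "(transpose_mat (Emat m nn i) * Emat m nn j) $$ (r, c)
      = (\<Sum>k<(\<Sum>k<m. nn k). (if k = blk_off nn i + r then 1 else 0) * (if k = blk_off nn j + c then 1 else 0))"
    using r c by (simp add: Emat_def scalar_prod_def atLeast0LessThan)
  also have "\<dots> = (\<Sum>k<(\<Sum>k<m. nn k). if k = blk_off nn j + c then (if k = blk_off nn i + r then 1 else 0) else 0)"
    by (intro sum.cong) auto
  also have "\<dots> = (if blk_off nn i + r = blk_off nn j + c then 1 else 0)"
    using blk_off_add_less_sum[where nn = nn, OF assms c] by simp
  also have "\<dots> = (if i = j then 1\<^sub>m (nn i) else 0\<^sub>m (nn i) (nn j)) $$ (r, c)"
  proof (cases "i = j")
    case False
    then show ?thesis using r c blk_off_add_inj[of nn i r j c] by auto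
  qed (use r c in simp)
  finally show "(transpose_mat (Emat m nn i) * Emat m nn j) $$ (r, c)
      = (if i = j then 1\<^sub>m (nn i) else 0\<^sub>m (nn i) (nn j)) $$ (r, c)" .
qed (simp_all add: Emat_def)

lemma one_mat_neq_zero_mat: "0 < k \<Longrightarrow> 1\<^sub>m k \<noteq> (0\<^sub>m k k :: 'a::zero_neq_one mat)"
  by (metis index_one_mat(1) index_zero_mat(1) zero_neq_one)

lemma transpose_Ecat_Cons_mult:
  fixes E :: "real mat"
  assumes E: "E \<in> carrier_mat (\<Sum>k<m. nn k) k"
  shows "transpose_mat (Ecat m nn (i # l)) * E =
    four_block_mat (transpose_mat (Emat m nn i) * E) (0\<^sub>m (nn i) 0)
      (transpose_mat (Ecat m nn l) * E) (0\<^sub>m (sum_list (map nn l)) 0)"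
proof -
  let ?N = "\<Sum>k<m. nn k" and ?w = "sum_list (map nn l)"
  have Ei: "transpose_mat (Emat m nn i) \<in> carrier_mat (nn i) ?N"
    and El: "transpose_mat (Ecat m nn l) \<in> carrier_mat ?w ?N"
    using Emat_carrier_mat Ecat_carrier_mat by auto
  have "transpose_mat (Ecat m nn (i # l)) =
      four_block_mat (transpose_mat (Emat m nn i)) (0\<^sub>m (nn i) 0) (transpose_mat (Ecat m nn l)) (0\<^sub>m ?w 0)"
    using Emat_carrier_mat[of m nn i] Ecat_carrier_mat[of m nn l]
    by (simp add: transpose_four_block_mat[of _ ?N "nn i" _ ?w _ 0])
  moreover have "E = four_block_mat E (0\<^sub>m ?N 0) (0\<^sub>m 0 k) (0\<^sub>m 0 0)"
    using E by (intro eq_matI) auto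
  ultimately have "transpose_mat (Ecat m nn (i # l)) * E =
      four_block_mat (transpose_mat (Emat m nn i)) (0\<^sub>m (nn i) 0) (transpose_mat (Ecat m nn l)) (0\<^sub>m ?w 0)
      * four_block_mat E (0\<^sub>m ?N 0) (0\<^sub>m 0 k) (0\<^sub>m 0 0)"
    by (rule arg_cong2)
  also have "\<dots> = four_block_mat (transpose_mat (Emat m nn i) * E) (0\<^sub>m (nn i) 0)
        (transpose_mat (Ecat m nn l) * E) (0\<^sub>m ?w 0)"
    using Ei El E by (subst mult_four_block_mat[OF Ei _ El _ E]) auto
  finally show ?thesis .
qed

lemma transpose_Ecat_mult_Emat_eq_zero_iff:
  assumes "set l \<subseteq> {..<m}" and "j < m" and "0 < nn j"
  shows "transpose_mat (Ecat m nn l) * Emat m nn j = 0\<^sub>m (sum_list (map nn l)) (nn j) \<longleftrightarrow> j \<notin> set l"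
  using assms(1)
proof (induction l)
  case Nil
  show ?case using Ecat_carrier_mat[of m nn "[]"] Emat_carrier_mat[of m nn j] by (intro iffI eq_matI) auto
next
  case (Cons i l)
  have l: "set l \<subseteq> {..<m}" using Cons.prems by simp
  have "transpose_mat (Emat m nn i) * Emat m nn j = 0\<^sub>m (nn i) (nn j) \<longleftrightarrow> i \<noteq> j"
    using transpose_Emat_mult_Emat[OF assms(2), of nn i] one_mat_neq_zero_mat[OF assms(3)] by auto
  then show ?case
    unfolding transpose_Ecat_Cons_mult[OF Emat_carrier_mat]
    using four_block_mat_eq_zero_iff[of "transpose_mat (Emat m nn i) * Emat m nn j" "nn i" "nn j" _ 0 _
        "sum_list (map nn l)"]
      Cons.IH[OF l] Ecat_carrier_mat[of m nn l] Emat_carrier_mat[of m nn j] Emat_carrier_mat[of m nn i]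
    by auto
qed

lemma transpose_Eset_mult_Emat_eq_zero_iff:
  assumes "S \<subseteq> {..<m}" and "j < m" and "0 < nn j"
  shows "transpose_mat (Eset m nn S) * Emat m nn j = 0\<^sub>m (dim_col (Eset m nn S)) (nn j) \<longleftrightarrow> j \<notin> S"
proof -
  have "finite S" using assms(1) finite_subset by blast
  then show ?thesis
    using transpose_Ecat_mult_Emat_eq_zero_iff[of "sorted_list_of_set S" m j nn] assms
      Ecat_carrier_mat[of m nn "sorted_list_of_set S"]
    unfolding Eset_def by simp
qed

section \<open>The transfer graph of the extended system\<close>

abbreviation complex_mat :: "real mat \<Rightarrow> complex mat" where
  "complex_mat \<equiv> map_mat complex_of_real"

lemma transfer_nonzero_iff_resolvent:
  assumes "A \<in> carrier_mat n n" and "B \<in> carrier_mat n p" and "C \<in> carrier_mat q n"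
  shows "transfer_nonzero A B C \<longleftrightarrow>
    (\<exists>s. det (s \<cdot>\<^sub>m 1\<^sub>m n - complex_mat A) \<noteq> 0 \<and>
      complex_mat C * resolvent (complex_mat A) s * complex_mat B \<noteq> 0\<^sub>m q p)"
proof -
  have dims: "dim_row A = n" "dim_row C = q" "dim_col B = p" using assms by auto
  have "complex_mat A \<in> carrier_mat n n" using assms(1) by simp
  note inverse = inverts_mat_resolvent_iff[OF this]
  show ?thesis
    unfolding transfer_nonzero_def dims conj_assoc[symmetric] inverse by auto
qed

lemma transfer_nonzero_iff_resolvent_notin:
  assumes A: "A \<in> carrier_mat n n" and B: "B \<in> carrier_mat n p" and C: "C \<in> carrier_mat q n"
    and "finite F"
  shows "transfer_nonzero A B C \<longleftrightarrow>
    (\<exists>s. s \<notin> F \<and> det (s \<cdot>\<^sub>m 1\<^sub>m n - complex_mat A) \<noteq> 0 \<and>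
      complex_mat C * resolvent (complex_mat A) s * complex_mat B \<noteq> 0\<^sub>m q p)"
proof -
  have "complex_mat A \<in> carrier_mat n n" "complex_mat B \<in> carrier_mat n p" "complex_mat C \<in> carrier_mat q n"
    using assms by auto
  then show ?thesis
    using transfer_nonzero_iff_resolvent[OF A B C] ex_transfer_resolvent_nonzero_notin \<open>finite F\<close>
    by blast
qed

lemma transfer_nonzero_block_diag:
  fixes A B C E F :: "real mat"
  assumes A: "A \<in> carrier_mat n n" and B: "B \<in> carrier_mat n p" and C: "C \<in> carrier_mat q n"
    and E: "E \<in> carrier_mat N p'" and F: "F \<in> carrier_mat q' N" and "0 < N"
  shows "transfer_nonzero (block_diag A (0\<^sub>m N N)) (block_diag B E) (block_diag C F) \<longleftrightarrow>
    transfer_nonzero A B C \<or> F * E \<noteq> 0\<^sub>m q' p'"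
proof -
  let ?A = "complex_mat A" and ?B = "complex_mat B" and ?C = "complex_mat C"
    and ?E = "complex_mat E" and ?F = "complex_mat F"
  have cA: "?A \<in> carrier_mat n n" and cB: "?B \<in> carrier_mat n p" and cC: "?C \<in> carrier_mat q n"
    and cE: "?E \<in> carrier_mat N p'" and cF: "?F \<in> carrier_mat q' N"
    using assms by auto
  have complex_block_diag: "complex_mat (block_diag P Q) = block_diag (complex_mat P) (complex_mat Q)" for P Q
    by (simp add: map_block_diag)
  have complex_zero: "complex_mat (0\<^sub>m a b) = 0\<^sub>m a b" for a b by (intro eq_matI) auto
  then have FE: "?F * ?E = 0\<^sub>m q' p' \<longleftrightarrow> F * E = 0\<^sub>m q' p'"
    using of_real_hom.mat_hom_mult[OF F E] of_real_hom.mat_hom_inj[of "F * E" "0\<^sub>m q' p'"] by metis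
  have regular: "det (s \<cdot>\<^sub>m 1\<^sub>m (n + N) - complex_mat (block_diag A (0\<^sub>m N N))) \<noteq> 0 \<longleftrightarrow>
      s \<noteq> 0 \<and> det (s \<cdot>\<^sub>m 1\<^sub>m n - ?A) \<noteq> 0" for s
    using det_smult_one_minus_block_diag_zero[OF cA, of s N] \<open>0 < N\<close>
    by (auto simp: complex_block_diag complex_zero)
  have transfer: "complex_mat (block_diag C F) * resolvent (complex_mat (block_diag A (0\<^sub>m N N))) s *
        complex_mat (block_diag B E) \<noteq> 0\<^sub>m (q + q') (p + p') \<longleftrightarrow>
      ?C * resolvent ?A s * ?B \<noteq> 0\<^sub>m q p \<or> F * E \<noteq> 0\<^sub>m q' p'"
    if "s \<noteq> 0" and "det (s \<cdot>\<^sub>m 1\<^sub>m n - ?A) \<noteq> 0" for s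
  proof -
    have "?C * resolvent ?A s * ?B \<in> carrier_mat q p" "?F * ?E \<in> carrier_mat q' p'"
      using cA cB cC cE cF by (meson mult_carrier_mat resolvent_carrier_mat)+
    then show ?thesis
      unfolding complex_block_diag complex_zero resolvent_transfer_block_diag[OF cA cB cC cE cF that]
      using block_diag_eq_zero_iff[of "?C * resolvent ?A s * ?B" q p _ q' p']
        smult_mat_eq_zero_iff[of "1 / s" "?F * ?E" q' p'] \<open>s \<noteq> 0\<close> FE
      by auto
  qed
  have "transfer_nonzero (block_diag A (0\<^sub>m N N)) (block_diag B E) (block_diag C F) \<longleftrightarrow>
      (\<exists>s. s \<noteq> 0 \<and> det (s \<cdot>\<^sub>m 1\<^sub>m n - ?A) \<noteq> 0 \<and> (?C * resolvent ?A s * ?B \<noteq> 0\<^sub>m q p \<or> F * E \<noteq> 0\<^sub>m q' p'))"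
    using transfer_nonzero_iff_resolvent[of "block_diag A (0\<^sub>m N N)" "n + N" "block_diag B E" "p + p'"
        "block_diag C F" "q + q'"] assms regular transfer
    by auto
  also have "\<dots> \<longleftrightarrow> transfer_nonzero A B C \<or> F * E \<noteq> 0\<^sub>m q' p'"
    using transfer_nonzero_iff_resolvent_notin[OF A B C, of "{0}"] ex_regular_notin[OF cA, of "{0}"]
    by blast
  finally show ?thesis .
qed

lemma transfer_graph_ext_eq_union:
  fixes n m :: nat and A :: "real mat" and B C :: "nat \<Rightarrow> real mat"
    and p q nn :: "nat \<Rightarrow> nat" and Nb :: "nat \<Rightarrow> nat set"
  assumes A: "A \<in> carrier_mat n n"
    and B: "\<And>i. i < m \<Longrightarrow> B i \<in> carrier_mat n (p i)"
    and C: "\<And>i. i < m \<Longrightarrow> C i \<in> carrier_mat (q i) n"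
    and Nb: "\<And>i. i < m \<Longrightarrow> Nb i \<subseteq> {..<m} \<and> i \<in> Nb i"
    and nn: "\<And>i. i < m \<Longrightarrow> nn i > 0"
  shows "transfer_graph m (ext_A m nn A) (ext_B m nn B) (ext_C m nn Nb C)
    = transfer_graph m A B C \<union> neighbor_graph m Nb"
proof -
  let ?N = "\<Sum>k<m. nn k"
  have "transfer_nonzero (ext_A m nn A) (ext_B m nn B j) (ext_C m nn Nb C i) \<longleftrightarrow>
      transfer_nonzero A (B j) (C i) \<or> j \<in> Nb i"
    if i: "i < m" and j: "j < m" for i j
  proof -
    let ?Es = "Eset m nn (Nb i)"
    have "nn j \<le> ?N" using j by (intro member_le_sum) auto
    then have N: "0 < ?N" using nn[OF j] by linarith
    have Es: "dim_row ?Es = ?N"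
      using Ecat_carrier_mat[of m nn "sorted_list_of_set (Nb i)"] unfolding Eset_def by (rule carrier_matD)
    have Et: "transpose_mat ?Es \<in> carrier_mat (dim_col ?Es) ?N"
      by (rule carrier_matI) (simp_all only: index_transpose_mat Es)
    have "ext_A m nn A = block_diag A (0\<^sub>m ?N ?N)"
      unfolding ext_A_def block_diag_def Let_def by simp
    moreover have "ext_B m nn B j = block_diag (B j) (Emat m nn j)"
      unfolding ext_B_def block_diag_def Let_def using Emat_carrier_mat[of m nn j] by simp
    moreover have "ext_C m nn Nb C i = block_diag (C i) (transpose_mat ?Es)"
      unfolding ext_C_def block_diag_def Let_def by (simp only: index_transpose_mat Es)
    moreover have "transpose_mat ?Es * Emat m nn j \<noteq> 0\<^sub>m (dim_col ?Es) (nn j) \<longleftrightarrow> j \<in> Nb i"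
      using transpose_Eset_mult_Emat_eq_zero_iff[of "Nb i" m j nn] Nb[OF i] j nn[OF j] by blast
    ultimately show ?thesis
      using transfer_nonzero_block_diag[OF A B[OF j] C[OF i] Emat_carrier_mat Et N] by simp
  qed
  then show ?thesis unfolding transfer_graph_def neighbor_graph_def by auto
qed

theorem proposition3:
  fixes n m :: nat and A :: "real mat" and B C :: "nat \<Rightarrow> real mat"
    and p q nn :: "nat \<Rightarrow> nat" and Nb :: "nat \<Rightarrow> nat set"
  assumes "A \<in> carrier_mat n n"
    and "\<And>i. i < m \<Longrightarrow> B i \<in> carrier_mat n (p i)"
    and "\<And>i. i < m \<Longrightarrow> C i \<in> carrier_mat (q i) n"
    and "\<And>i. i < m \<Longrightarrow> Nb i \<subseteq> {..<m} \<and> i \<in> Nb i"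
    and "\<And>i. i < m \<Longrightarrow> nn i > 0"
  shows "strongly_connected m
           (transfer_graph m (ext_A m nn A) (ext_B m nn B) (ext_C m nn Nb C))
     \<longleftrightarrow> strongly_connected m (transfer_graph m A B C \<union> neighbor_graph m Nb)"
  by (simp add: transfer_graph_ext_eq_union[OF assms])

end
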